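(* Let $G$ and $H$ be finite abelian groups, written additively, of the same even order $k>2$, let $f:G\to H$ be semi-planar, and suppose $S(G,H;f)$ splits into two substructures $S_1$ and $S_2$ with $\mathcal{L}(0,0)\in S_1$. For $i=1,2$ and $a\in G$ let $P_a^i=\{b\in H : \mathcal{L}(a,b)\in S_i\}$, and let $S(a,b)=\{t\in G : f(t-a)=f(t)+b\}$. Then for every non-zero $a\in G$, $$P_a^1=\{b\in H : |S(a,b)|=2\},\qquad P_a^2=\{b\in H : |S(a,b)|=0\}.$$
   Context: A function $f:G\to H$ is semi-planar if for every non-identity $a\in G$ and every $y\in H$, the equation $f(x+a)-f(x)=y$ has either $0$ or $2$ solutions $x\in G$. The incidence structure $S(G,H;f)$ has points $(x,y)\in G\times H$ and lines $\mathcal{L}(a,b)$ for $(a,b)\in G\times H$, with $(x,y)$ incident with $\mathcal{L}(a,b)$ iff $y=f(x-a)+b$. Its incidence graph is the bipartite graph on points and lines with an edge for each incident pair. $S(G,H;f)$ splits into two substructures $S_1,S_2$ if its incidence graph has exactly two connected components; $S_1$ and $S_2$ are the incidence structures formed by the points and lines of the two components, and $\mathcal{L}(a,b)\in S_i$ means the line lies in component $S_i$. *)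

theory Defs
  imports Main
begin

definition semi_planar :: "('g::ab_group_add \<Rightarrow> 'h::ab_group_add) \<Rightarrow> bool" where
  "semi_planar f \<longleftrightarrow>
     (\<forall>a. a \<noteq> 0 \<longrightarrow> (\<forall>y. card {x. f (x + a) - f x = y} = 0 \<or> card {x. f (x + a) - f x = y} = 2))"

text \<open>Vertices of the incidence graph of S(G,H;f): points Inl (x,y), lines Inr (a,b).\<close>
definition incid_edges :: "('g::ab_group_add \<Rightarrow> 'h::ab_group_add)
     \<Rightarrow> ((('g \<times> 'h) + ('g \<times> 'h)) \<times> (('g \<times> 'h) + ('g \<times> 'h))) set" where
  "incid_edges f = {(Inl (x, y), Inr (a, b)) | x y a b. y = f (x - a) + b}"

definition incid_conn :: "('g::ab_group_add \<Rightarrow> 'h::ab_group_add)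
     \<Rightarrow> ((('g \<times> 'h) + ('g \<times> 'h)) \<times> (('g \<times> 'h) + ('g \<times> 'h))) set" where
  "incid_conn f = (incid_edges f \<union> (incid_edges f)\<inverse>)\<^sup>*"

definition incid_components :: "('g::ab_group_add \<Rightarrow> 'h::ab_group_add)
     \<Rightarrow> (('g \<times> 'h) + ('g \<times> 'h)) set set" where
  "incid_components f = UNIV // incid_conn f"

definition splits_in_two :: "('g::ab_group_add \<Rightarrow> 'h::ab_group_add) \<Rightarrow> bool" where
  "splits_in_two f \<longleftrightarrow> card (incid_components f) = 2"

definition S1 :: "('g::ab_group_add \<Rightarrow> 'h::ab_group_add) \<Rightarrow> (('g \<times> 'h) + ('g \<times> 'h)) set" where
  "S1 f = incid_conn f `` {Inr (0, 0)}"

definition S2 :: "('g::ab_group_add \<Rightarrow> 'h::ab_group_add) \<Rightarrow> (('g \<times> 'h) + ('g \<times> 'h)) set" where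
  "S2 f = (THE C. C \<in> incid_components f \<and> C \<noteq> S1 f)"

definition P_lines :: "(('g \<times> 'h) + ('g \<times> 'h)) set \<Rightarrow> 'g \<Rightarrow> 'h set" where
  "P_lines C a = {b. Inr (a, b) \<in> C}"

definition Sset :: "('g::ab_group_add \<Rightarrow> 'h::ab_group_add) \<Rightarrow> 'g \<Rightarrow> 'h \<Rightarrow> 'g set" where
  "Sset f a b = {t. f (t - a) = f t + b}"

end

theory Submission
  imports Defs
begin

text \<open>
  Translating both coordinates by a fixed (c, d) is an automorphism of S(G,H;f). Since L(0,0)
  lies in S_1, the lines of S_1 form a subgroup of G \<times> H, and as there are only two components,
  the sum of two lines outside S_1 lies in S_1: the subgroup has index 2. A nonempty S(a,b) puts
  L(a,b) into S_1, because a point (t, f t) of L(0,0) lies on L(a,-b), and L(0,2b) \<in> S_1.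
  Translation by a vertical line L(0,d) outside S_1 maps P^1_a onto its complement, so
  |P^1_a| = k/2; by semi-planarity exactly k/2 values b have |S(a,b)| = 2, so the two sets agree.
\<close>

lemma equiv_incid_conn: "equiv UNIV (incid_conn f)"
  unfolding incid_conn_def
  by (intro equivI refl_rtrancl sym_rtrancl trans_rtrancl) (auto intro: symI)

lemma incid_conn_sym: "(u, v) \<in> incid_conn f \<Longrightarrow> (v, u) \<in> incid_conn f"
  using equiv_incid_conn by (rule equivE) (auto dest: symD)

lemma incid_conn_trans: "(u, v) \<in> incid_conn f \<Longrightarrow> (v, w) \<in> incid_conn f \<Longrightarrow> (u, w) \<in> incid_conn f"
  unfolding incid_conn_def by (rule rtrancl_trans)

lemma incid_conn_incident: "y = f (x - a) + b \<Longrightarrow> (Inl (x, y), Inr (a, b)) \<in> incid_conn f"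
  unfolding incid_conn_def incid_edges_def by blast

lemma S1_iff: "u \<in> S1 f \<longleftrightarrow> (Inr (0, 0), u) \<in> incid_conn f"
  unfolding S1_def by simp

lemma S1_conn_iff: "(u, v) \<in> incid_conn f \<Longrightarrow> u \<in> S1 f \<longleftrightarrow> v \<in> S1 f"
  using S1_iff incid_conn_sym incid_conn_trans by blast

lemma origin_line_in_S1: "Inr (0, 0) \<in> S1 f"
  by (simp add: S1_def incid_conn_def)

lemma S1_in_components: "S1 f \<in> incid_components f"
  unfolding S1_def incid_components_def by (rule quotientI) simp

lemma components_eq_S1_Compl:
  assumes "splits_in_two f"
  shows "incid_components f = {S1 f, - S1 f}"
proof -
  let ?Q = "UNIV // incid_conn f"
  have "card (?Q - {S1 f}) = 1"
    using assms S1_in_components[of f] unfolding splits_in_two_def incid_components_def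
    by (simp add: card_Diff_singleton)
  then obtain C where C: "?Q - {S1 f} = {C}" by (auto simp: card_1_singleton_iff)
  then have Q: "?Q = {S1 f, C}" and "C \<noteq> S1 f"
    using S1_in_components[of f] unfolding incid_components_def by blast+
  then have "S1 f \<inter> C = {}" using quotient_disj[OF equiv_incid_conn, of "S1 f" f C] by simp
  moreover have "S1 f \<union> C = UNIV" using Union_quotient[OF equiv_incid_conn, of f] Q by simp
  ultimately have "C = - S1 f" by blast
  with Q show ?thesis unfolding incid_components_def by simp
qed

lemma S2_eq_Compl_S1:
  assumes "splits_in_two f"
  shows "S2 f = - S1 f"
proof -
  have "S1 f \<noteq> - S1 f" by auto
  then show ?thesis
    unfolding S2_def components_eq_S1_Compl[OF assms] by (intro the_equality) auto
qed

lemma Compl_S1_nonempty: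
  assumes "splits_in_two f"
  shows "- S1 f \<noteq> {}"
  using in_quotient_imp_non_empty[OF equiv_incid_conn] components_eq_S1_Compl[OF assms]
  unfolding incid_components_def by blast

lemma Compl_S1_connected:
  assumes "splits_in_two f" "u \<notin> S1 f" "v \<notin> S1 f"
  shows "(u, v) \<in> incid_conn f"
  using in_quotient_imp_in_rel[OF equiv_incid_conn, of "- S1 f"] assms components_eq_S1_Compl
  unfolding incid_components_def by blast

definition incid_shift :: "'g::ab_group_add \<Rightarrow> 'h::ab_group_add
    \<Rightarrow> ('g \<times> 'h) + ('g \<times> 'h) \<Rightarrow> ('g \<times> 'h) + ('g \<times> 'h)" where
  "incid_shift c d u = (case u of Inl (x, y) \<Rightarrow> Inl (x + c, y + d) | Inr (a, b) \<Rightarrow> Inr (a + c, b + d))"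

lemma incid_edges_shift:
  "(u, v) \<in> incid_edges f \<Longrightarrow> (incid_shift c d u, incid_shift c d v) \<in> incid_edges f"
  unfolding incid_edges_def incid_shift_def by (auto simp: algebra_simps)

lemma incid_conn_shift:
  "(u, v) \<in> incid_conn f \<Longrightarrow> (incid_shift c d u, incid_shift c d v) \<in> incid_conn f"
  unfolding incid_conn_def
proof (induction rule: rtrancl_induct)
  case (step v w)
  then have "(incid_shift c d v, incid_shift c d w) \<in> incid_edges f \<union> (incid_edges f)\<inverse>"
    using incid_edges_shift by blast
  with step.IH show ?case by (rule rtrancl_into_rtrancl)
qed simp

lemma line_S1_add:
  assumes "Inr (a, b) \<in> S1 f" "Inr (a', b') \<in> S1 f"
  shows "Inr (a + a', b + b') \<in> S1 f"
proof -
  have "(incid_shift a b (Inr (0, 0)), incid_shift a b (Inr (a', b'))) \<in> incid_conn f"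
    using incid_conn_shift assms(2) S1_iff by blast
  then have "(Inr (a, b), Inr (a + a', b + b')) \<in> incid_conn f"
    by (simp add: incid_shift_def add.commute)
  then show ?thesis using assms(1) S1_iff incid_conn_trans by blast
qed

lemma line_S1_uminus:
  assumes "Inr (a, b) \<in> S1 f"
  shows "Inr (- a, - b) \<in> S1 f"
proof -
  have "(incid_shift (- a) (- b) (Inr (0, 0)), incid_shift (- a) (- b) (Inr (a, b))) \<in> incid_conn f"
    using incid_conn_shift assms S1_iff by blast
  then have "(Inr (- a, - b), Inr (0, 0)) \<in> incid_conn f" by (simp add: incid_shift_def)
  then show ?thesis using S1_iff incid_conn_sym by blast
qed

lemma line_not_S1_add:
  assumes "splits_in_two f" "Inr (a, b) \<notin> S1 f" "Inr (c, d) \<notin> S1 f"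
  shows "Inr (a + c, b + d) \<in> S1 f"
proof -
  have "Inr (- c, - d) \<notin> S1 f" using line_S1_uminus[of "- c" "- d" f] assms(3) by auto
  with assms(1,2) have "(Inr (a, b), Inr (- c, - d)) \<in> incid_conn f" by (rule Compl_S1_connected)
  then have "(incid_shift c d (Inr (a, b)), incid_shift c d (Inr (- c, - d))) \<in> incid_conn f"
    by (rule incid_conn_shift)
  then have "(Inr (a + c, b + d), Inr (0, 0)) \<in> incid_conn f" by (simp add: incid_shift_def)
  then show ?thesis using S1_iff incid_conn_sym by blast
qed

lemma line_S1_double:
  assumes "splits_in_two f"
  shows "Inr (c + c, d + d) \<in> S1 f"
  using line_S1_add[of c d f c d] line_not_S1_add[OF assms, of c d c d] by blast

lemma line_S1_if_Sset_nonempty: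
  assumes "splits_in_two f" "Sset f a b \<noteq> {}"
  shows "Inr (a, b) \<in> S1 f"
proof -
  obtain t where t: "f (t - a) = f t + b" using assms(2) unfolding Sset_def by auto
  have "(Inl (t, f t), Inr (0, 0)) \<in> incid_conn f" by (rule incid_conn_incident) simp
  then have "Inl (t, f t) \<in> S1 f" using S1_conn_iff origin_line_in_S1 by metis
  moreover have "(Inl (t, f t), Inr (a, - b)) \<in> incid_conn f"
    by (rule incid_conn_incident) (simp add: t)
  ultimately have "Inr (a, - b) \<in> S1 f" using S1_conn_iff by metis
  from line_S1_add[OF this line_S1_double[OF assms(1), of 0 b]] show ?thesis by simp
qed

lemma vertical_line_not_S1:
  assumes "splits_in_two f"
  obtains d where "Inr (0, d) \<notin> S1 f"
proof -
  obtain u where u: "u \<notin> S1 f" using Compl_S1_nonempty[OF assms] by blast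
  obtain a b where ab: "Inr (a, b) \<notin> S1 f"
  proof (cases u)
    case (Inl p)
    then obtain x y where xy: "u = Inl (x, y)" by (cases p) simp
    have "(Inl (x, y), Inr (x, y - f 0)) \<in> incid_conn f" by (rule incid_conn_incident) simp
    with u xy have "Inr (x, y - f 0) \<notin> S1 f" using S1_conn_iff by metis
    then show ?thesis by (rule that)
  next
    case (Inr p)
    with u show ?thesis using that by (cases p) simp
  qed
  have "0 \<in> Sset f a (f (- a) - f 0)" by (simp add: Sset_def)
  then obtain c where c: "Inr (a, c) \<in> S1 f" using line_S1_if_Sset_nonempty[OF assms] by blast
  have "Inr (0, b - c) \<notin> S1 f"
  proof
    assume "Inr (0, b - c) \<in> S1 f"
    from line_S1_add[OF c this] ab show False by simp
  qed
  then show ?thesis by (rule that)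
qed

lemma double_card_P_lines_S1:
  fixes f :: "'g::ab_group_add \<Rightarrow> 'h::{ab_group_add, finite}"
  assumes "splits_in_two f"
  shows "2 * card (P_lines (S1 f) a) = card (UNIV :: 'h set)"
proof -
  obtain d where d: "Inr (0, d) \<notin> S1 f" using vertical_line_not_S1[OF assms] .
  let ?P = "P_lines (S1 f) a"
  have shift_inj: "inj_on (\<lambda>b. b + d) X" for X :: "'h set" by (simp add: inj_on_def)
  have "(\<lambda>b. b + d) ` ?P \<subseteq> - ?P"
  proof
    fix c assume "c \<in> (\<lambda>b. b + d) ` ?P"
    then obtain b where b: "Inr (a, b) \<in> S1 f" "c = b + d" by (auto simp: P_lines_def)
    have "Inr (a, b + d) \<notin> S1 f"
      using line_S1_add[OF _ line_S1_uminus[OF b(1)], of a "b + d"] d by auto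
    with b(2) show "c \<in> - ?P" by (simp add: P_lines_def)
  qed
  then have "card ?P \<le> card (- ?P)" by (intro card_inj_on_le[OF shift_inj]) simp_all
  moreover have "(\<lambda>b. b + d) ` (- ?P) \<subseteq> ?P"
    using line_not_S1_add[OF assms _ d] by (auto simp: P_lines_def)
  then have "card (- ?P) \<le> card ?P" by (intro card_inj_on_le[OF shift_inj]) simp_all
  ultimately have "card ?P = card (- ?P)" by simp
  moreover have "card ?P + card (- ?P) = card (UNIV :: 'h set)"
    using card_Un_disjoint[of ?P "- ?P"] by (simp add: Compl_partition)
  ultimately show ?thesis by simp
qed

lemma card_Sset_0_or_2:
  assumes "semi_planar f" "a \<noteq> 0"
  shows "card (Sset f a b) = 0 \<or> card (Sset f a b) = 2"
proof -
  have "Sset f a b = {x. f (x + - a) - f x = b}"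
    unfolding Sset_def by (auto simp: algebra_simps)
  moreover have "- a \<noteq> 0" using assms(2) by simp
  ultimately show ?thesis using assms(1) unfolding semi_planar_def by presburger
qed

lemma sum_card_Sset:
  fixes f :: "'g::{ab_group_add, finite} \<Rightarrow> 'h::{ab_group_add, finite}"
  shows "(\<Sum>b\<in>UNIV. card (Sset f a b)) = card (UNIV :: 'g set)"
proof -
  have "t \<in> Sset f a (f (t - a) - f t)" for t by (simp add: Sset_def)
  then have "(\<Union>b. Sset f a b) = UNIV" by blast
  moreover have "card (\<Union>b. Sset f a b) = (\<Sum>b\<in>UNIV. card (Sset f a b))"
    by (rule card_UN_disjoint) (auto simp: Sset_def)
  ultimately show ?thesis by simp
qed

lemma double_card_Sset_eq_2:
  fixes f :: "'g::{ab_group_add, finite} \<Rightarrow> 'h::{ab_group_add, finite}"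
  assumes "semi_planar f" "a \<noteq> 0"
  shows "2 * card {b. card (Sset f a b) = 2} = card (UNIV :: 'g set)"
proof -
  have "(\<Sum>b\<in>UNIV. card (Sset f a b)) = (\<Sum>b\<in>UNIV. if card (Sset f a b) = 2 then 2 else 0)"
    by (rule sum.cong) (use card_Sset_0_or_2[OF assms] in auto)
  also have "\<dots> = 2 * card {b. card (Sset f a b) = 2}"
    by (simp add: sum.If_cases)
  finally show ?thesis using sum_card_Sset[of f a] by simp
qed

theorem lemma4:
  fixes f :: "'g::{ab_group_add, finite} \<Rightarrow> 'h::{ab_group_add, finite}"
  assumes "card (UNIV::'g set) = card (UNIV::'h set)"
    and "even (card (UNIV::'g set))"
    and "card (UNIV::'g set) > 2"
    and "semi_planar f"
    and "splits_in_two f"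
  shows "\<forall>a::'g. a \<noteq> 0 \<longrightarrow>
           P_lines (S1 f) a = {b. card (Sset f a b) = 2} \<and>
           P_lines (S2 f) a = {b. card (Sset f a b) = 0}"
proof (intro allI impI)
  fix a :: 'g assume a: "a \<noteq> 0"
  let ?A = "{b. card (Sset f a b) = 2}"
  have "?A \<subseteq> P_lines (S1 f) a"
  proof
    fix b assume "b \<in> ?A"
    then have "Sset f a b \<noteq> {}" by auto
    then show "b \<in> P_lines (S1 f) a"
      unfolding P_lines_def using line_S1_if_Sset_nonempty[OF assms(5)] by simp
  qed
  moreover have "card (P_lines (S1 f) a) = card ?A"
    using double_card_P_lines_S1[OF assms(5), of a] double_card_Sset_eq_2[OF assms(4) a] assms(1)
    by simp
  ultimately have P1: "P_lines (S1 f) a = ?A"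
    by (metis card_subset_eq finite)
  then have "P_lines (S2 f) a = - ?A"
    by (auto simp: S2_eq_Compl_S1[OF assms(5)] P_lines_def)
  with P1 show "P_lines (S1 f) a = ?A \<and> P_lines (S2 f) a = {b. card (Sset f a b) = 0}"
    using card_Sset_0_or_2[OF assms(4) a] by auto
qed

end
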